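(* Let $(M,\pi)$ be a partial $H$-module with standard dilation $((\overline M,T_\pi),\varphi)$. The following are equivalent: (i) $\pi:H\to\mathrm{End}_k(M)$ is a morphism of algebras, i.e. $M$ is a (global) $H$-module; (ii) there is a morphism of partial $H$-modules $\overline\varphi:\overline M\to M$ with $\varphi\circ\overline\varphi=\mathrm{id}_{\overline M}$, where $\overline M$ is regarded as a partial $H$-module via its global $H$-action; (iii) $\varphi:M\to\overline M$ is bijective. In this case $\varphi:M\to\overline M$ is an isomorphism of $H$-modules and $T_\pi=\mathrm{id}_{\overline M}$.
   Context: Throughout, $k$ is a field and $H$ is a Hopf algebra over $k$ with bijective antipode $S$ and Sweedler notation $\Delta(h)=h_{(1)}\otimes h_{(2)}$. A partial $H$-module is a vector space $M$ with linear $\pi:H\to\mathrm{End}_k(M)$ satisfying, for all $h,k\in H$: - $\pi(1_H)=\mathrm{id}$; - $\pi(h)\pi(k_{(1)})\pi(S(k_{(2)}))=\pi(hk_{(1)})\pi(S(k_{(2)}))$; - $\pi(h_{(1)})\pi(S(h_{(2)}))\pi(k)=\pi(h_{(1)})\pi(S(h_{(2)})k)$; - $\pi(h)\pi(S(k_{(1)}))\pi(k_{(2)})=\pi(hS(k_{(1)}))\pi(k_{(2)})$; - $\pi(S(h_{(1)}))\pi(h_{(2)})\pi(k)=\pi(S(h_{(1)}))\pi(h_{(2)}k)$. Morphisms are linear maps commuting with all $\pi(h)$. A left $H$-module (action $\triangleright$) is regarded as a partial $H$-module via $\pi(h)(m)=h\triangleright m$. Standard dilation: $\operatorname{Hom}_k(H,M)$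 is a left $H$-module via $(h\triangleright f)(k)=f(kh)$. Set $\varphi(m)(h)=\pi(h)(m)$, $\overline M=H\triangleright\varphi(M)$ (the $H$-submodule generated by $\varphi(M)$), and $T_\pi:\overline M\to\overline M$, $T_\pi(f)=\varphi(f(1_H))$. *)

theory Defs
  imports Complex_Main
begin

text \<open>
The Hopf algebra H is a
type 'h of class ring_1 (its algebra multiplication and unit) together with a scalar
multiplication sc making it a k-vector space (Main's locale vector_space) compatible with
the multiplication.  Elements of H tensor H are represented by finite lists of pairs
(a list [(a1,b1),...,(an,bn)] stands for the sum of the ai tensor bi); the comultiplication
is a function Delta :: 'h => ('h * 'h) list (Sweedler notation: h(1) tensor h(2) is the list
Delta h).  Equality in H tensor H (resp. H tensor H tensor H) is tested against all pairs
(triples) of linear functionals H -> k, which is faithful for vector spaces over a field.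
\<close>

definition tensor2_eq :: "('k::field \<Rightarrow> 'h::ab_group_add \<Rightarrow> 'h) \<Rightarrow> ('h \<times> 'h) list \<Rightarrow> ('h \<times> 'h) list \<Rightarrow> bool" where
  "tensor2_eq sc xs ys \<longleftrightarrow>
     (\<forall>f g. Vector_Spaces.linear sc (*) f \<and> Vector_Spaces.linear sc (*) g \<longrightarrow>
        sum_list (map (\<lambda>(a,b). f a * g b) xs) = sum_list (map (\<lambda>(a,b). f a * g b) ys))"

definition tensor3_eq :: "('k::field \<Rightarrow> 'h::ab_group_add \<Rightarrow> 'h) \<Rightarrow> ('h \<times> 'h \<times> 'h) list \<Rightarrow> ('h \<times> 'h \<times> 'h) list \<Rightarrow> bool" where
  "tensor3_eq sc xs ys \<longleftrightarrow>
     (\<forall>f g l. Vector_Spaces.linear sc (*) f \<and> Vector_Spaces.linear sc (*) g \<and> Vector_Spaces.linear sc (*) l \<longrightarrow>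
        sum_list (map (\<lambda>(a,b,c). f a * g b * l c) xs) = sum_list (map (\<lambda>(a,b,c). f a * g b * l c) ys))"

definition hopf_algebra ::
  "('k::field \<Rightarrow> 'h::ring_1 \<Rightarrow> 'h) \<Rightarrow> ('h \<Rightarrow> ('h \<times> 'h) list) \<Rightarrow> ('h \<Rightarrow> 'k) \<Rightarrow> ('h \<Rightarrow> 'h) \<Rightarrow> bool" where
  "hopf_algebra sc Delta eps S \<longleftrightarrow>
     vector_space sc
   \<and> (\<forall>c a b. sc c (a * b) = sc c a * b \<and> sc c (a * b) = a * sc c b)
   \<comment> \<open>Delta is linear\<close>
   \<and> (\<forall>a b. tensor2_eq sc (Delta (a + b)) (Delta a @ Delta b))
   \<and> (\<forall>c a. tensor2_eq sc (Delta (sc c a)) (map (\<lambda>(x,y). (sc c x, y)) (Delta a)))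
   \<comment> \<open>coassociativity\<close>
   \<and> (\<forall>h. tensor3_eq sc
          (concat (map (\<lambda>(a,b). map (\<lambda>(x,y). (x,y,b)) (Delta a)) (Delta h)))
          (concat (map (\<lambda>(a,b). map (\<lambda>(x,y). (a,x,y)) (Delta b)) (Delta h))))
   \<comment> \<open>counit\<close>
   \<and> Vector_Spaces.linear sc (*) eps
   \<and> (\<forall>h. sum_list (map (\<lambda>(a,b). sc (eps a) b) (Delta h)) = h)
   \<and> (\<forall>h. sum_list (map (\<lambda>(a,b). sc (eps b) a) (Delta h)) = h)
   \<comment> \<open>Delta and eps are algebra maps\<close>
   \<and> (\<forall>a b. tensor2_eq sc (Delta (a * b))
          (concat (map (\<lambda>(x,y). map (\<lambda>(u,v). (x * u, y * v)) (Delta b)) (Delta a))))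
   \<and> tensor2_eq sc (Delta 1) [(1, 1)]
   \<and> (\<forall>a b. eps (a * b) = eps a * eps b) \<and> eps 1 = 1
   \<comment> \<open>antipode\<close>
   \<and> Vector_Spaces.linear sc sc S
   \<and> (\<forall>h. sum_list (map (\<lambda>(a,b). S a * b) (Delta h)) = sc (eps h) 1)
   \<and> (\<forall>h. sum_list (map (\<lambda>(a,b). a * S b) (Delta h)) = sc (eps h) 1)"

definition partial_module ::
  "('k::field \<Rightarrow> 'h::ring_1 \<Rightarrow> 'h) \<Rightarrow> ('h \<Rightarrow> ('h \<times> 'h) list) \<Rightarrow> ('h \<Rightarrow> 'h)
   \<Rightarrow> ('k \<Rightarrow> 'm::ab_group_add \<Rightarrow> 'm) \<Rightarrow> ('h \<Rightarrow> 'm \<Rightarrow> 'm) \<Rightarrow> bool" where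
  "partial_module sc Delta S scM \<rho> \<longleftrightarrow>
     vector_space scM
   \<and> (\<forall>h. Vector_Spaces.linear scM scM (\<rho> h))
   \<and> (\<forall>a b m. \<rho> (a + b) m = \<rho> a m + \<rho> b m)
   \<and> (\<forall>c a m. \<rho> (sc c a) m = scM c (\<rho> a m))
   \<and> \<rho> 1 = id
   \<and> (\<forall>h k m. sum_list (map (\<lambda>(a,b). \<rho> h (\<rho> a (\<rho> (S b) m))) (Delta k))
             = sum_list (map (\<lambda>(a,b). \<rho> (h * a) (\<rho> (S b) m)) (Delta k)))
   \<and> (\<forall>h k m. sum_list (map (\<lambda>(a,b). \<rho> a (\<rho> (S b) (\<rho> k m))) (Delta h))
             = sum_list (map (\<lambda>(a,b). \<rho> a (\<rho> (S b * k) m)) (Delta h)))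
   \<and> (\<forall>h k m. sum_list (map (\<lambda>(a,b). \<rho> h (\<rho> (S a) (\<rho> b m))) (Delta k))
             = sum_list (map (\<lambda>(a,b). \<rho> (h * S a) (\<rho> b m)) (Delta k)))
   \<and> (\<forall>h k m. sum_list (map (\<lambda>(a,b). \<rho> (S a) (\<rho> b (\<rho> k m))) (Delta h))
             = sum_list (map (\<lambda>(a,b). \<rho> (S a) (\<rho> (b * k) m)) (Delta h)))"

definition hom_act :: "'h::ring_1 \<Rightarrow> ('h \<Rightarrow> 'm) \<Rightarrow> ('h \<Rightarrow> 'm)" where
  "hom_act h f = (\<lambda>k. f (k * h))"

definition dil_phi :: "('h \<Rightarrow> 'm \<Rightarrow> 'm) \<Rightarrow> 'm \<Rightarrow> ('h \<Rightarrow> 'm)" where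
  "dil_phi \<rho> m = (\<lambda>h. \<rho> h m)"

inductive_set Mbar :: "('k::field \<Rightarrow> 'm::ab_group_add \<Rightarrow> 'm) \<Rightarrow> ('h::ring_1 \<Rightarrow> 'm \<Rightarrow> 'm) \<Rightarrow> ('h \<Rightarrow> 'm) set"
  for scM :: "'k::field \<Rightarrow> 'm::ab_group_add \<Rightarrow> 'm" and \<rho> :: "'h::ring_1 \<Rightarrow> 'm \<Rightarrow> 'm" where
  gen: "dil_phi \<rho> m \<in> Mbar scM \<rho>"
| zero: "(\<lambda>_. 0) \<in> Mbar scM \<rho>"
| add: "f \<in> Mbar scM \<rho> \<Longrightarrow> g \<in> Mbar scM \<rho> \<Longrightarrow> (\<lambda>k. f k + g k) \<in> Mbar scM \<rho>"
| scale: "f \<in> Mbar scM \<rho> \<Longrightarrow> (\<lambda>k. scM c (f k)) \<in> Mbar scM \<rho>"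
| act: "f \<in> Mbar scM \<rho> \<Longrightarrow> hom_act h f \<in> Mbar scM \<rho>"

definition T_pi :: "('h::ring_1 \<Rightarrow> 'm \<Rightarrow> 'm) \<Rightarrow> ('h \<Rightarrow> 'm) \<Rightarrow> ('h \<Rightarrow> 'm)" where
  "T_pi \<rho> f = dil_phi \<rho> (f 1)"

definition Mbar_morphism ::
  "('k::field \<Rightarrow> 'm::ab_group_add \<Rightarrow> 'm) \<Rightarrow> ('h::ring_1 \<Rightarrow> 'm \<Rightarrow> 'm) \<Rightarrow> (('h \<Rightarrow> 'm) \<Rightarrow> 'm) \<Rightarrow> bool" where
  "Mbar_morphism scM \<rho> psi \<longleftrightarrow>
     (\<forall>f\<in>Mbar scM \<rho>. \<forall>g\<in>Mbar scM \<rho>. psi (\<lambda>k. f k + g k) = psi f + psi g)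
   \<and> (\<forall>c. \<forall>f\<in>Mbar scM \<rho>. psi (\<lambda>k. scM c (f k)) = scM c (psi f))
   \<and> (\<forall>h. \<forall>f\<in>Mbar scM \<rho>. psi (hom_act h f) = \<rho> h (psi f))"

end

theory Submission
  imports Defs
begin

text \<open>
Evaluation at 1 is a left inverse of \<open>\<phi>\<close>, since \<open>\<rho> 1 = id\<close>; so \<open>\<phi>\<close> is always injective and
everything hinges on whether \<open>\<phi>(M)\<close> is already all of \<open>Mbar\<close>.  If \<open>\<rho>\<close> is multiplicative,
\<open>\<phi>\<close> intertwines \<open>\<rho>\<close> with the action on \<open>Hom(H,M)\<close>, so \<open>\<phi>(M)\<close> is a submodule and equals \<open>Mbar\<close>.
Conversely, if \<open>h \<triangleright> \<phi>(m) = \<phi>(n)\<close> for some \<open>n\<close>, evaluating at 1 gives \<open>n = \<rho> h m\<close> and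
evaluating at \<open>g\<close> gives \<open>\<rho> (g h) m = \<rho> g (\<rho> h m)\<close>.
\<close>

lemma dil_phi_at_one:
  assumes "\<rho> 1 = id"
  shows "dil_phi \<rho> m 1 = m"
  using assms by (simp add: dil_phi_def)

lemma inj_dil_phi:
  assumes "\<rho> 1 = id"
  shows "inj (dil_phi \<rho>)"
  by (metis assms dil_phi_at_one injI)

lemma dil_phi_zero:
  assumes "\<And>h. Vector_Spaces.linear scM scM (\<rho> h)"
  shows "dil_phi \<rho> 0 = (\<lambda>_. 0)"
  using module_hom.zero[OF assms[unfolded linear_iff_module_hom]] by (simp add: dil_phi_def)

lemma dil_phi_add:
  assumes "\<And>h. Vector_Spaces.linear scM scM (\<rho> h)"
  shows "dil_phi \<rho> (m + n) = (\<lambda>k. dil_phi \<rho> m k + dil_phi \<rho> n k)"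
  using module_hom.add[OF assms[unfolded linear_iff_module_hom]] by (simp add: dil_phi_def)

lemma dil_phi_scale:
  assumes "\<And>h. Vector_Spaces.linear scM scM (\<rho> h)"
  shows "dil_phi \<rho> (scM c m) = (\<lambda>k. scM c (dil_phi \<rho> m k))"
  using module_hom.scale[OF assms[unfolded linear_iff_module_hom]] by (simp add: dil_phi_def)

lemma dil_phi_action:
  assumes "\<forall>a b. \<rho> (a * b) = \<rho> a \<circ> \<rho> b"
  shows "dil_phi \<rho> (\<rho> h m) = hom_act h (dil_phi \<rho> m)"
  using assms by (simp add: dil_phi_def hom_act_def)

lemma Mbar_subset_range_dil_phi:
  assumes lin: "\<And>h. Vector_Spaces.linear scM scM (\<rho> h)"
    and mult: "\<forall>a b. \<rho> (a * b) = \<rho> a \<circ> \<rho> b"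
  shows "Mbar scM \<rho> \<subseteq> range (dil_phi \<rho>)"
proof
  fix f assume "f \<in> Mbar scM \<rho>"
  then show "f \<in> range (dil_phi \<rho>)"
  proof (induction rule: Mbar.induct)
    case zero show ?case using dil_phi_zero[where \<rho> = \<rho>, OF lin] by (metis rangeI)
  next
    case (add f g) then show ?case by (auto simp flip: dil_phi_add[where \<rho> = \<rho>, OF lin])
  next
    case (scale f c) then show ?case by (auto simp flip: dil_phi_scale[where \<rho> = \<rho>, OF lin])
  next
    case (act f h) then show ?case by (auto simp flip: dil_phi_action[OF mult])
  qed simp
qed

lemma Mbar_eq_range_dil_phi:
  assumes "\<And>h. Vector_Spaces.linear scM scM (\<rho> h)"
    and "\<forall>a b. \<rho> (a * b) = \<rho> a \<circ> \<rho> b"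
  shows "Mbar scM \<rho> = range (dil_phi \<rho>)"
  using Mbar_subset_range_dil_phi[where \<rho> = \<rho>, OF assms] by (auto intro: Mbar.gen)

lemma multiplicative_if_Mbar_subset_range_dil_phi:
  assumes one: "\<rho> 1 = id"
    and sub: "Mbar scM \<rho> \<subseteq> range (dil_phi \<rho>)"
  shows "\<forall>a b. \<rho> (a * b) = \<rho> a \<circ> \<rho> b"
proof (intro allI ext)
  fix a b m
  have "hom_act b (dil_phi \<rho> m) \<in> Mbar scM \<rho>" by (intro Mbar.act Mbar.gen)
  with sub obtain n where n: "hom_act b (dil_phi \<rho> m) = dil_phi \<rho> n" by blast
  have "n = \<rho> b m" using fun_cong[OF n, of 1] one by (simp add: hom_act_def dil_phi_def)
  then show "\<rho> (a * b) m = (\<rho> a \<circ> \<rho> b) m"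
    using fun_cong[OF n, of a] by (simp add: hom_act_def dil_phi_def)
qed

lemma bij_betw_dil_phi_Mbar_iff:
  assumes one: "\<rho> 1 = id" and lin: "\<And>h. Vector_Spaces.linear scM scM (\<rho> h)"
  shows "bij_betw (dil_phi \<rho>) UNIV (Mbar scM \<rho>) \<longleftrightarrow> (\<forall>a b. \<rho> (a * b) = \<rho> a \<circ> \<rho> b)"
proof
  assume "bij_betw (dil_phi \<rho>) UNIV (Mbar scM \<rho>)"
  then have "Mbar scM \<rho> \<subseteq> range (dil_phi \<rho>)" by (simp add: bij_betw_def)
  then show "\<forall>a b. \<rho> (a * b) = \<rho> a \<circ> \<rho> b"
    by (rule multiplicative_if_Mbar_subset_range_dil_phi[where \<rho> = \<rho>, OF one])
next
  assume "\<forall>a b. \<rho> (a * b) = \<rho> a \<circ> \<rho> b"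
  then show "bij_betw (dil_phi \<rho>) UNIV (Mbar scM \<rho>)"
    using inj_dil_phi[where \<rho> = \<rho>, OF one] Mbar_eq_range_dil_phi[where \<rho> = \<rho>, OF lin]
    by (simp add: bij_betw_def)
qed

lemma Mbar_morphism_eval_one:
  assumes "\<rho> 1 = id" and "\<And>h. Vector_Spaces.linear scM scM (\<rho> h)"
    and "\<forall>a b. \<rho> (a * b) = \<rho> a \<circ> \<rho> b"
  shows "Mbar_morphism scM \<rho> (\<lambda>f. f 1)"
  using Mbar_eq_range_dil_phi[where \<rho> = \<rho>, OF assms(2,3)] assms(1)
  by (auto simp: Mbar_morphism_def hom_act_def dil_phi_def)

lemma dil_phi_eval_one_Mbar:
  assumes "\<rho> 1 = id" and "\<And>h. Vector_Spaces.linear scM scM (\<rho> h)"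
    and "\<forall>a b. \<rho> (a * b) = \<rho> a \<circ> \<rho> b"
    and "f \<in> Mbar scM \<rho>"
  shows "dil_phi \<rho> (f 1) = f"
  using Mbar_eq_range_dil_phi[where \<rho> = \<rho>, OF assms(2,3)] assms(1,4) by (auto simp: dil_phi_at_one)

lemma multiplicative_iff_Mbar_retraction:
  assumes "\<rho> 1 = id" and "\<And>h. Vector_Spaces.linear scM scM (\<rho> h)"
  shows "(\<forall>a b. \<rho> (a * b) = \<rho> a \<circ> \<rho> b)
     \<longleftrightarrow> (\<exists>psi. Mbar_morphism scM \<rho> psi \<and> (\<forall>f\<in>Mbar scM \<rho>. dil_phi \<rho> (psi f) = f))"
proof
  assume "\<forall>a b. \<rho> (a * b) = \<rho> a \<circ> \<rho> b"
  then show "\<exists>psi. Mbar_morphism scM \<rho> psi \<and> (\<forall>f\<in>Mbar scM \<rho>. dil_phi \<rho> (psi f) = f)"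
    using Mbar_morphism_eval_one dil_phi_eval_one_Mbar assms by blast
next
  assume "\<exists>psi. Mbar_morphism scM \<rho> psi \<and> (\<forall>f\<in>Mbar scM \<rho>. dil_phi \<rho> (psi f) = f)"
  then have "Mbar scM \<rho> \<subseteq> range (dil_phi \<rho>)" by (metis rangeI subsetI)
  then show "\<forall>a b. \<rho> (a * b) = \<rho> a \<circ> \<rho> b"
    by (rule multiplicative_if_Mbar_subset_range_dil_phi[where \<rho> = \<rho>, OF assms(1)])
qed

theorem mainTheorem12:
  fixes sc :: "'k::field \<Rightarrow> 'h::ring_1 \<Rightarrow> 'h"
    and Delta :: "'h \<Rightarrow> ('h \<times> 'h) list"
    and eps :: "'h \<Rightarrow> 'k"
    and S :: "'h \<Rightarrow> 'h"
    and scM :: "'k \<Rightarrow> 'm::ab_group_add \<Rightarrow> 'm"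
    and \<rho> :: "'h \<Rightarrow> 'm \<Rightarrow> 'm"
  assumes H: "hopf_algebra sc Delta eps S"
    and S_bij: "bij S"
    and M: "partial_module sc Delta S scM \<rho>"
  shows "((\<forall>a b. \<rho> (a * b) = \<rho> a \<circ> \<rho> b)
            \<longleftrightarrow> (\<exists>psi. Mbar_morphism scM \<rho> psi \<and> (\<forall>f\<in>Mbar scM \<rho>. dil_phi \<rho> (psi f) = f)))
       \<and> ((\<forall>a b. \<rho> (a * b) = \<rho> a \<circ> \<rho> b) \<longleftrightarrow> bij_betw (dil_phi \<rho>) UNIV (Mbar scM \<rho>))
       \<and> ((\<forall>a b. \<rho> (a * b) = \<rho> a \<circ> \<rho> b) \<longrightarrow>
            (bij_betw (dil_phi \<rho>) UNIV (Mbar scM \<rho>)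
             \<and> (\<forall>m n. dil_phi \<rho> (m + n) = (\<lambda>k. dil_phi \<rho> m k + dil_phi \<rho> n k))
             \<and> (\<forall>c m. dil_phi \<rho> (scM c m) = (\<lambda>k. scM c (dil_phi \<rho> m k)))
             \<and> (\<forall>h m. dil_phi \<rho> (\<rho> h m) = hom_act h (dil_phi \<rho> m))
             \<and> (\<forall>f\<in>Mbar scM \<rho>. T_pi \<rho> f = f)))"
proof -
  have one: "\<rho> 1 = id" and lin: "\<And>h. Vector_Spaces.linear scM scM (\<rho> h)"
    using M by (auto simp: partial_module_def)
  have dilation_facts: "bij_betw (dil_phi \<rho>) UNIV (Mbar scM \<rho>)
      \<and> (\<forall>h m. dil_phi \<rho> (\<rho> h m) = hom_act h (dil_phi \<rho> m))
      \<and> (\<forall>f\<in>Mbar scM \<rho>. T_pi \<rho> f = f)"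
    if mult: "\<forall>a b. \<rho> (a * b) = \<rho> a \<circ> \<rho> b"
    using bij_betw_dil_phi_Mbar_iff[where \<rho> = \<rho>, OF one lin] dil_phi_action[OF mult]
      dil_phi_eval_one_Mbar[where \<rho> = \<rho>, OF one lin mult] mult
    by (simp add: T_pi_def)
  show ?thesis
    using multiplicative_iff_Mbar_retraction[where \<rho> = \<rho>, OF one lin]
      bij_betw_dil_phi_Mbar_iff[where \<rho> = \<rho>, OF one lin]
      dil_phi_add[where \<rho> = \<rho>, OF lin] dil_phi_scale[where \<rho> = \<rho>, OF lin] dilation_facts
    by blast
qed

end
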